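(* Define a sequence $(a_n)_{n\ge1}$ by $a_1=1$, $a_2=2$ and $n a_n=(n+2)a_{n-1}+2(n+1)a_{n-2}$ for $n\ge 3$. Then: (a) for $n\ge 2$, the number of $\alpha\in\mathcal{ORCT}^*_n$ with no fixed points is $a_{n-1}$; (b) for $n\ge 1$, the number of $\alpha\in\mathcal{ORCT}^*_n$ with exactly one fixed point is $a_n$; (c) for $m\ge 2$, no $\alpha\in\mathcal{ORCT}^*_n$ has exactly $m$ fixed points.
   Context: $X_n=\{1,2,\dots,n\}$ with its usual order; maps are written on the right ($x\alpha$). A map $\alpha:X_n\to X_n$ is order-reversing if $x\le y$ implies $x\alpha\ge y\alpha$, and a contraction if $|x\alpha-y\alpha|\le|x-y|$ for all $x,y$. $\mathcal{ORCT}^*_n$ is the set of all order-reversing contractions $X_n\to X_n$ defined on all of $X_n$ (this includes the constant maps). A fixed point of $\alpha$ is $x$ with $x\alpha=x$. *)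

theory Defs
  imports Complex_Main "HOL-Library.FuncSet"
begin

text \<open>Maps X_n -> X_n are represented as functions nat => nat that are
  extensional on {1..n} (value undefined outside).\<close>

definition order_reversing :: "nat \<Rightarrow> (nat \<Rightarrow> nat) \<Rightarrow> bool" where
  "order_reversing n f \<longleftrightarrow> (\<forall>x\<in>{1..n}. \<forall>y\<in>{1..n}. x \<le> y \<longrightarrow> f y \<le> f x)"

definition contraction :: "nat \<Rightarrow> (nat \<Rightarrow> nat) \<Rightarrow> bool" where
  "contraction n f \<longleftrightarrow> (\<forall>x\<in>{1..n}. \<forall>y\<in>{1..n}.
      \<bar>int (f x) - int (f y)\<bar> \<le> \<bar>int x - int y\<bar>)"

definition ORCT :: "nat \<Rightarrow> (nat \<Rightarrow> nat) set" where
  "ORCT n = {f \<in> {1..n} \<rightarrow>\<^sub>E {1..n}. order_reversing n f \<and> contraction n f}"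

definition fixed_points :: "nat \<Rightarrow> (nat \<Rightarrow> nat) \<Rightarrow> nat set" where
  "fixed_points n f = {x \<in> {1..n}. f x = x}"

text \<open>a_1 = 1, a_2 = 2, n a_n = (n+2) a_(n-1) + 2(n+1) a_(n-2) for n >= 3.
  Values are real so that the recurrence is stated exactly (no truncating division);
  seqa 0 is an unused dummy.\<close>
fun seqa :: "nat \<Rightarrow> real" where
  "seqa 0 = 0"
| "seqa (Suc 0) = 1"
| "seqa (Suc (Suc 0)) = 2"
| "seqa (Suc (Suc (Suc k))) =
     ((real (k+3) + 2) * seqa (Suc (Suc k)) + 2 * (real (k+3) + 1) * seqa (Suc k)) / real (k+3)"

end

(*
  By order reversal and contraction, a map in ORCT n drops by 0 or 1 at each step, so it is
  determined by its value c at 1 and its set S of descents, subject only to c - card S >= 1;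
  summing over S gives card (ORCT (n + 1)) = (n + 2) 2^(n - 1).  Since f x - x is strictly
  decreasing, f has at most one fixed point, and a fixed-point-free f crosses the diagonal
  through a two-cycle q -> q + 1 -> q.  Collapsing this two-cycle into a fixed point is a
  bijection from the fixed-point-free maps on X_(m+1) onto the maps on X_m with one fixed point.
  Writing F n for the number of maps with one fixed point, F (m + 1) + F m = card (ORCT (m + 1)),
  while the recurrence gives a_m + a_(m+1) = (m + 2) 2^(m - 1); so F = a by induction.
*)

theory Submission
  imports Defs
begin

definition unit_descent :: "nat \<Rightarrow> (nat \<Rightarrow> nat) \<Rightarrow> bool" where
  "unit_descent n f \<longleftrightarrow> (\<forall>x\<in>{1..<n}. f (Suc x) \<le> f x \<and> f x \<le> Suc (f (Suc x)))"

lemma unit_descent_chain: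
  assumes "unit_descent n f" "1 \<le> x" "x \<le> y" "y \<le> n"
  shows "f y \<le> f x \<and> f x \<le> f y + (y - x)"
  using assms(3,4)
proof (induction y rule: dec_induct)
  case base
  then show ?case by simp
next
  case (step y)
  then have "f (Suc y) \<le> f y \<and> f y \<le> Suc (f (Suc y))"
    using assms(1,2) unfolding unit_descent_def by auto
  with step show ?case by auto
qed

lemma ORCT_iff_unit_descent:
  "f \<in> ORCT n \<longleftrightarrow> f \<in> {1..n} \<rightarrow>\<^sub>E {1..n} \<and> unit_descent n f"
proof
  assume f: "f \<in> ORCT n"
  have "f (Suc x) \<le> f x \<and> f x \<le> Suc (f (Suc x))" if "x \<in> {1..<n}" for x
  proof -
    have x: "x \<in> {1..n}" "Suc x \<in> {1..n}" using that by auto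
    have "f (Suc x) \<le> f x"
      using f x unfolding ORCT_def order_reversing_def by auto
    moreover have "\<bar>int (f x) - int (f (Suc x))\<bar> \<le> \<bar>int x - int (Suc x)\<bar>"
      using f x unfolding ORCT_def contraction_def by blast
    ultimately show ?thesis by auto
  qed
  with f show "f \<in> {1..n} \<rightarrow>\<^sub>E {1..n} \<and> unit_descent n f"
    unfolding ORCT_def unit_descent_def by auto
next
  assume f: "f \<in> {1..n} \<rightarrow>\<^sub>E {1..n} \<and> unit_descent n f"
  then have chain: "f y \<le> f x \<and> f x \<le> f y + (y - x)"
    if "1 \<le> x" "x \<le> y" "y \<le> n" for x y
    using unit_descent_chain that by blast
  have "order_reversing n f"
    unfolding order_reversing_def using chain by auto
  moreover have "contraction n f"
    unfolding contraction_def
  proof (intro ballI)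
    fix x y assume "x \<in> {1..n}" "y \<in> {1..n}"
    then show "\<bar>int (f x) - int (f y)\<bar> \<le> \<bar>int x - int y\<bar>"
      using chain[of x y] chain[of y x] by (cases "x \<le> y") auto
  qed
  ultimately show "f \<in> ORCT n" using f unfolding ORCT_def by auto
qed

lemma ORCT_in_range: "f \<in> ORCT n \<Longrightarrow> x \<in> {1..n} \<Longrightarrow> f x \<in> {1..n}"
  unfolding ORCT_def by blast

lemma ORCT_undefined: "f \<in> ORCT n \<Longrightarrow> x \<notin> {1..n} \<Longrightarrow> f x = undefined"
  unfolding ORCT_def using PiE_arb by blast

lemma ORCT_unit_step:
  "f \<in> ORCT n \<Longrightarrow> x \<in> {1..<n} \<Longrightarrow> f (Suc x) \<le> f x \<and> f x \<le> Suc (f (Suc x))"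
  unfolding ORCT_iff_unit_descent unit_descent_def by blast

lemma ORCT_displacement_strict_decreasing:
  assumes "f \<in> ORCT n" "1 \<le> x" "x < y" "y \<le> n"
  shows "f y + x < f x + y"
proof -
  have "f y \<le> f x" using assms unfolding ORCT_def order_reversing_def by auto
  with \<open>x < y\<close> show ?thesis by linarith
qed

lemma card_fixed_points_le_1:
  assumes f: "f \<in> ORCT n"
  shows "card (fixed_points n f) \<le> 1"
proof -
  have "a = b" if "a \<in> fixed_points n f" "b \<in> fixed_points n f" for a b
    using that ORCT_displacement_strict_decreasing[OF f, of a b]
      ORCT_displacement_strict_decreasing[OF f, of b a]
    unfolding fixed_points_def by (cases a b rule: linorder_cases) auto
  then show ?thesis by (simp add: card_le_Suc0_iff_eq fixed_points_def)
qed

lemma card_fixed_points_eq_0_iff: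
  "card (fixed_points n f) = 0 \<longleftrightarrow> (\<forall>x\<in>{1..n}. f x \<noteq> x)"
  unfolding fixed_points_def by auto

lemma card_fixed_points_eq_1_iff:
  assumes "f \<in> ORCT n"
  shows "card (fixed_points n f) = 1 \<longleftrightarrow> (\<exists>p\<in>{1..n}. f p = p)"
  using card_fixed_points_le_1[OF assms] card_fixed_points_eq_0_iff[of n f] by force

definition descents :: "nat \<Rightarrow> (nat \<Rightarrow> nat) \<Rightarrow> nat set" where
  "descents n f = {x \<in> {1..<n}. f (Suc x) < f x}"

text \<open>A pair \<open>(S, c)\<close> records the descent set and the value at 1; the value at \<open>n\<close> is then
  \<open>c - card S\<close>, which must be positive.\<close>
definition ORCT_code :: "nat \<Rightarrow> (nat set \<times> nat) set" where
  "ORCT_code n = (SIGMA S:Pow {1..<n}. {Suc (card S)..n})"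

definition ORCT_decode :: "nat \<Rightarrow> nat set \<times> nat \<Rightarrow> (nat \<Rightarrow> nat)" where
  "ORCT_decode n = (\<lambda>(S, c). restrict (\<lambda>x. c - card {i \<in> S. i < x}) {1..n})"

lemma card_less_Suc:
  "finite S \<Longrightarrow> card {i \<in> S. i < Suc x} = card {i \<in> S. i < x} + (if x \<in> S then 1 else 0)"
proof -
  assume "finite S"
  moreover have "{i \<in> S. i < Suc x} = (if x \<in> S then insert x {i \<in> S. i < x} else {i \<in> S. i < x})"
    by (auto simp: less_Suc_eq)
  ultimately show ?thesis by simp
qed

lemma ORCT_eq_first_minus_descents:
  assumes f: "f \<in> ORCT n" and "1 \<le> x" "x \<le> n"
  shows "f x + card {i \<in> descents n f. i < x} = f 1"
  using assms(2,3)
proof (induction x rule: dec_induct)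
  case base
  then show ?case unfolding descents_def by simp
next
  case (step x)
  have "finite (descents n f)" unfolding descents_def by simp
  moreover have "x \<in> descents n f \<longleftrightarrow> f (Suc x) < f x"
    using step unfolding descents_def by auto
  moreover have "f (Suc x) \<le> f x \<and> f x \<le> Suc (f (Suc x))"
    using ORCT_unit_step[OF f] step by auto
  ultimately show ?case using step card_less_Suc[of "descents n f" x] by auto
qed

lemma ORCT_decode_apply:
  "x \<in> {1..n} \<Longrightarrow> ORCT_decode n (S, c) x = c - card {i \<in> S. i < x}"
  unfolding ORCT_decode_def by simp

lemma ORCT_codeD:
  assumes "(S, c) \<in> ORCT_code n"
  shows "finite S" "card {i \<in> S. i < x} < c"
proof -
  show fin: "finite S" using assms unfolding ORCT_code_def by (auto intro: finite_subset)
  have "card {i \<in> S. i < x} \<le> card S" using fin by (intro card_mono) auto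
  with assms show "card {i \<in> S. i < x} < c" unfolding ORCT_code_def by auto
qed

lemma ORCT_decode_in_ORCT:
  assumes p: "p \<in> ORCT_code n"
  shows "ORCT_decode n p \<in> ORCT n"
proof -
  obtain S c where Sc: "p = (S, c)" by fastforce
  have c: "c \<le> n" using p Sc unfolding ORCT_code_def by auto
  note less = ORCT_codeD[OF p[unfolded Sc]]
  have "ORCT_decode n p \<in> {1..n} \<rightarrow>\<^sub>E {1..n}"
    unfolding ORCT_decode_def Sc restrict_PiE_iff using less(2) c
    by (auto simp: Suc_le_eq)
  moreover have "unit_descent n (ORCT_decode n p)"
    unfolding unit_descent_def Sc
    using ORCT_decode_apply card_less_Suc[OF less(1)] less(2) by auto
  ultimately show ?thesis unfolding ORCT_iff_unit_descent by blast
qed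

lemma ORCT_decode_descents:
  assumes f: "f \<in> ORCT n"
  shows "ORCT_decode n (descents n f, f 1) = f"
proof
  fix x
  show "ORCT_decode n (descents n f, f 1) x = f x"
  proof (cases "x \<in> {1..n}")
    case True
    then show ?thesis
      using ORCT_eq_first_minus_descents[OF f] ORCT_decode_apply by fastforce
  next
    case False
    then show ?thesis using ORCT_undefined[OF f False] by (auto simp: ORCT_decode_def)
  qed
qed

lemma descents_ORCT_decode:
  assumes p: "p \<in> ORCT_code n"
  shows "(descents n (ORCT_decode n p), ORCT_decode n p 1) = p"
proof -
  obtain S c where Sc: "p = (S, c)" by fastforce
  have S: "S \<subseteq> {1..<n}" and "1 \<le> n" using p Sc unfolding ORCT_code_def by auto
  note less = ORCT_codeD[OF p[unfolded Sc]]
  have descent_iff: "ORCT_decode n p (Suc x) < ORCT_decode n p x \<longleftrightarrow> x \<in> S"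
    if "x \<in> {1..<n}" for x
    using that ORCT_decode_apply card_less_Suc[OF less(1), of x] less(2)[of "Suc x"]
    unfolding Sc by auto
  have "ORCT_decode n p 1 = c - card {i \<in> S. i < 1}"
    unfolding Sc by (rule ORCT_decode_apply) (use \<open>1 \<le> n\<close> in auto)
  also have "{i \<in> S. i < 1} = {}" using S by auto
  finally have "ORCT_decode n p 1 = c" by simp
  moreover have "descents n (ORCT_decode n p) = S"
    using S descent_iff unfolding descents_def by auto
  ultimately show ?thesis using Sc by simp
qed

lemma descents_in_ORCT_code:
  assumes f: "f \<in> ORCT n" and "1 \<le> n"
  shows "(descents n f, f 1) \<in> ORCT_code n"
proof -
  have "descents n f \<subseteq> {1..<n}" unfolding descents_def by auto
  then have "{i \<in> descents n f. i < n} = descents n f" by auto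
  then have "f n + card (descents n f) = f 1"
    using ORCT_eq_first_minus_descents[OF f] \<open>1 \<le> n\<close> by fastforce
  moreover have "f n \<in> {1..n}" "f 1 \<in> {1..n}" using ORCT_in_range[OF f] \<open>1 \<le> n\<close> by auto
  ultimately show ?thesis unfolding ORCT_code_def descents_def by auto
qed

lemma bij_betw_ORCT_decode:
  "1 \<le> n \<Longrightarrow> bij_betw (ORCT_decode n) (ORCT_code n) (ORCT n)"
  using ORCT_decode_in_ORCT ORCT_decode_descents descents_ORCT_decode descents_in_ORCT_code
  by (intro bij_betw_byWitness[where f' = "\<lambda>f. (descents n f, f 1)"]) blast+

lemma two_mult_sum_card_Pow:
  assumes "finite A"
  shows "2 * (\<Sum>S\<in>Pow A. card S) = card A * 2 ^ card A"
proof -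
  have "(\<Sum>S\<in>Pow A. card S) = (\<Sum>S\<in>Pow A. card (A - S))"
    by (rule sum.reindex_bij_witness[of _ "\<lambda>S. A - S" "\<lambda>S. A - S"]) (auto simp: double_diff)
  then have "2 * (\<Sum>S\<in>Pow A. card S) = (\<Sum>S\<in>Pow A. card S + card (A - S))"
    by (simp add: sum.distrib)
  also have "\<dots> = (\<Sum>S\<in>Pow A. card A)"
    using assms by (intro sum.cong) (auto simp: card_Diff_subset card_mono finite_subset)
  finally show ?thesis using assms by (simp add: card_Pow)
qed

lemma card_ORCT: "2 * card (ORCT (Suc n)) = (n + 2) * 2 ^ n"
proof -
  let ?A = "{1..<Suc n}"
  have "card (ORCT (Suc n)) = card (ORCT_code (Suc n))"
    using bij_betw_same_card[OF bij_betw_ORCT_decode[of "Suc n"]] by simp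
  also have "\<dots> = (\<Sum>S\<in>Pow ?A. Suc n - card S)"
    unfolding ORCT_code_def by (subst card_SigmaI) auto
  also have "\<dots> + (\<Sum>S\<in>Pow ?A. card S) = (\<Sum>S\<in>Pow ?A. Suc n)"
  proof -
    have "Suc n - card S + card S = Suc n" if "S \<in> Pow ?A" for S
      using card_mono[of ?A S] that by simp
    then show ?thesis unfolding sum.distrib[symmetric] by (intro sum.cong) auto
  qed
  finally have "card (ORCT (Suc n)) + (\<Sum>S\<in>Pow ?A. card S) = Suc n * 2 ^ n"
    by (simp add: card_Pow)
  moreover have "2 * (\<Sum>S\<in>Pow ?A. card S) = n * 2 ^ n"
    using two_mult_sum_card_Pow[of ?A] by simp
  ultimately show ?thesis by (simp add: add_mult_distrib)
qed

lemma ORCT_fixed_point_threshold: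
  assumes f: "f \<in> ORCT n" and p: "p \<in> {1..n}" "f p = p" and x: "x \<in> {1..n}"
  shows "x \<le> f x \<longleftrightarrow> x \<le> p" and "p < x \<Longrightarrow> f x < x"
  using ORCT_displacement_strict_decreasing[OF f, of x p]
    ORCT_displacement_strict_decreasing[OF f, of p x] p x
  by (cases x p rule: linorder_cases; auto)+

lemma ORCT_two_cycle_threshold:
  assumes f: "f \<in> ORCT n" and q: "q \<in> {1..<n}" "f q = Suc q" "f (Suc q) = q"
    and x: "x \<in> {1..n}"
  shows "x < f x \<longleftrightarrow> x \<le> q"
  using ORCT_displacement_strict_decreasing[OF f, of x q]
    ORCT_displacement_strict_decreasing[OF f, of "Suc q" x] q x
  by (cases x q rule: linorder_cases; cases "x = Suc q") auto

lemma ORCT_fixed_point_free_two_cycle: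
  assumes f: "f \<in> ORCT n" and "1 \<le> n" and free: "\<forall>x\<in>{1..n}. f x \<noteq> x"
  obtains q where "q \<in> {1..<n}" "f q = Suc q" "f (Suc q) = q"
proof -
  let ?Q = "{x \<in> {1..n}. x < f x}"
  define q where "q = Max ?Q"
  have one: "1 \<in> {1..n}" using \<open>1 \<le> n\<close> by simp
  then have "1 \<in> ?Q" using ORCT_in_range[OF f one] bspec[OF free one] by auto
  then have "q \<in> ?Q" unfolding q_def by (intro Max_in) auto
  have q_max: "x \<le> q" if "x \<in> ?Q" for x
    unfolding q_def using that by (intro Max_ge) auto
  have "n \<notin> ?Q" using ORCT_in_range[OF f, of n] by auto
  with \<open>q \<in> ?Q\<close> have q: "q \<in> {1..<n}" by (cases "q = n") auto
  then have Suc_q: "Suc q \<in> {1..n}" by simp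
  then have "f (Suc q) < Suc q"
    using q_max[of "Suc q"] bspec[OF free Suc_q] by (auto simp: nat_neq_iff)
  moreover have "q < f q" using \<open>q \<in> ?Q\<close> by simp
  moreover have "f (Suc q) \<le> f q \<and> f q \<le> Suc (f (Suc q))"
    using ORCT_unit_step[OF f q] .
  ultimately show ?thesis using that[OF q] by simp
qed

text \<open>The fixed point \<open>p\<close> of \<open>h\<close> becomes the two-cycle \<open>p \<mapsto> p + 1 \<mapsto> p\<close>: the graph of \<open>h\<close> is
  raised by one up to \<open>p\<close> and shifted one step to the right beyond it.  The tests \<open>x \<le> h x\<close>
  and \<open>x < f x\<close> locate the fixed point and the two-cycle without naming them.\<close>
definition split_fixed_point :: "nat \<Rightarrow> (nat \<Rightarrow> nat) \<Rightarrow> (nat \<Rightarrow> nat)" where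
  "split_fixed_point m h =
     restrict (\<lambda>x. if x \<le> m \<and> x \<le> h x then Suc (h x) else h (x - 1)) {1..Suc m}"

definition merge_two_cycle :: "nat \<Rightarrow> (nat \<Rightarrow> nat) \<Rightarrow> (nat \<Rightarrow> nat)" where
  "merge_two_cycle m f = restrict (\<lambda>x. if x < f x then f x - 1 else f (Suc x)) {1..m}"

lemma split_fixed_point_eq:
  assumes h: "h \<in> ORCT m" and p: "p \<in> {1..m}" "h p = p" and x: "x \<in> {1..Suc m}"
  shows "split_fixed_point m h x = (if x \<le> p then Suc (h x) else h (x - 1))"
proof -
  have "x \<le> m \<and> x \<le> h x \<longleftrightarrow> x \<le> p"
    using ORCT_fixed_point_threshold(1)[OF h p, of x] p x by (cases "x \<le> m") auto
  with x show ?thesis unfolding split_fixed_point_def by simp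
qed

lemma merge_two_cycle_eq:
  assumes f: "f \<in> ORCT (Suc m)" and q: "q \<in> {1..m}" "f q = Suc q" "f (Suc q) = q"
    and x: "x \<in> {1..m}"
  shows "merge_two_cycle m f x = (if x \<le> q then f x - 1 else f (Suc x))"
  using ORCT_two_cycle_threshold[OF f _ q(2,3), of x] q x
  unfolding merge_two_cycle_def by auto

lemma merge_two_cycle_fixed_point:
  assumes "f \<in> ORCT (Suc m)" "q \<in> {1..m}" "f q = Suc q" "f (Suc q) = q"
  shows "merge_two_cycle m f q = q"
  using merge_two_cycle_eq[OF assms, of q] assms(2,3) by simp

lemma split_fixed_point_in_ORCT:
  assumes h: "h \<in> ORCT m" and p: "p \<in> {1..m}" "h p = p"
  shows "split_fixed_point m h \<in> ORCT (Suc m)"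
proof -
  let ?g = "split_fixed_point m h"
  note g = split_fixed_point_eq[OF h p]
  have "?g x \<in> {1..Suc m}" if x: "x \<in> {1..Suc m}" for x
  proof (cases "x \<le> p")
    case True
    then show ?thesis using g[OF x] ORCT_in_range[OF h, of x] x p by auto
  next
    case False
    then have "x - 1 \<in> {1..m}" using x p by auto
    from ORCT_in_range[OF h this] show ?thesis using g[OF x] False by auto
  qed
  moreover have "?g \<in> extensional {1..Suc m}" unfolding split_fixed_point_def by simp
  moreover have "?g (Suc x) \<le> ?g x \<and> ?g x \<le> Suc (?g (Suc x))" if x: "x \<in> {1..<Suc m}" for x
  proof -
    consider "x < p" | "x = p" | "p < x" by linarith
    then show ?thesis
    proof cases
      case 1
      then show ?thesis using g[of x] g[of "Suc x"] ORCT_unit_step[OF h, of x] x p by auto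
    next
      case 2
      then show ?thesis using g[of x] g[of "Suc x"] x p by auto
    next
      case 3
      then have "x - 1 \<in> {1..<m}" using x p by auto
      from ORCT_unit_step[OF h this] show ?thesis using g[of x] g[of "Suc x"] x 3 by auto
    qed
  qed
  ultimately show ?thesis unfolding ORCT_iff_unit_descent PiE_iff unit_descent_def by blast
qed

lemma split_fixed_point_fixed_point_free:
  assumes h: "h \<in> ORCT m" and p: "p \<in> {1..m}" "h p = p" and x: "x \<in> {1..Suc m}"
  shows "split_fixed_point m h x \<noteq> x"
proof (cases "x \<le> p")
  case True
  then show ?thesis
    using split_fixed_point_eq[OF h p x] ORCT_fixed_point_threshold(1)[OF h p, of x] p x by auto
next
  case False
  then have "x - 1 \<in> {1..m}" "p \<le> x - 1" using p x by auto
  then show ?thesis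
    using split_fixed_point_eq[OF h p x] ORCT_fixed_point_threshold(2)[OF h p, of "x - 1"] p False
    by (cases "p = x - 1") auto
qed

lemma merge_two_cycle_in_ORCT:
  assumes f: "f \<in> ORCT (Suc m)" and q: "q \<in> {1..m}" "f q = Suc q" "f (Suc q) = q"
  shows "merge_two_cycle m f \<in> ORCT m"
proof -
  let ?h = "merge_two_cycle m f"
  note h = merge_two_cycle_eq[OF f q]
  have above: "x < f x \<longleftrightarrow> x \<le> q" if "x \<in> {1..Suc m}" for x
    using ORCT_two_cycle_threshold[OF f _ q(2,3) that] q by auto
  have "?h x \<in> {1..m}" if "x \<in> {1..m}" for x
    using h[OF that] ORCT_in_range[OF f, of x] ORCT_in_range[OF f, of "Suc x"]
      ORCT_unit_step[OF f, of x] above[of x] that by auto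
  moreover have "?h \<in> extensional {1..m}" unfolding merge_two_cycle_def by simp
  moreover have "?h (Suc x) \<le> ?h x \<and> ?h x \<le> Suc (?h (Suc x))" if x: "x \<in> {1..<m}" for x
  proof -
    consider "x < q" | "x = q" | "q < x" by linarith
    then show ?thesis
    proof cases
      case 1
      then show ?thesis
        using h[of x] h[of "Suc x"] ORCT_unit_step[OF f, of x] above[of "Suc x"] x by auto
    next
      case 2
      then show ?thesis using h[of x] h[of "Suc x"] ORCT_unit_step[OF f, of "Suc x"] x q by auto
    next
      case 3
      then show ?thesis using h[of x] h[of "Suc x"] ORCT_unit_step[OF f, of "Suc x"] x by auto
    qed
  qed
  ultimately show ?thesis unfolding ORCT_iff_unit_descent PiE_iff unit_descent_def by blast
qed

lemma merge_split_fixed_point: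
  assumes h: "h \<in> ORCT m" and p: "p \<in> {1..m}" "h p = p"
  shows "merge_two_cycle m (split_fixed_point m h) = h"
proof
  fix x
  let ?g = "split_fixed_point m h"
  note g = split_fixed_point_eq[OF h p]
  have "?g p = Suc p" "?g (Suc p) = p" using g[of p] g[of "Suc p"] p by auto
  note merge = merge_two_cycle_eq[OF split_fixed_point_in_ORCT[OF h p] p(1) this]
  show "merge_two_cycle m ?g x = h x"
  proof (cases "x \<in> {1..m}")
    case True
    then show ?thesis using merge[OF True] g[of x] g[of "Suc x"] by auto
  next
    case False
    then show ?thesis using ORCT_undefined[OF h False] unfolding merge_two_cycle_def by auto
  qed
qed

lemma split_merge_two_cycle:
  assumes f: "f \<in> ORCT (Suc m)" and q: "q \<in> {1..m}" "f q = Suc q" "f (Suc q) = q"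
  shows "split_fixed_point m (merge_two_cycle m f) = f"
proof
  fix x
  let ?h = "merge_two_cycle m f"
  note h = merge_two_cycle_eq[OF f q]
  note split = split_fixed_point_eq[OF merge_two_cycle_in_ORCT[OF f q] q(1)
      merge_two_cycle_fixed_point[OF f q]]
  have above: "x < f x" if "x \<in> {1..q}" for x
    using ORCT_two_cycle_threshold[OF f _ q(2,3), of x] q that by auto
  show "split_fixed_point m ?h x = f x"
  proof (cases "x \<in> {1..Suc m}")
    case True
    consider "x \<le> q" | "x = Suc q" | "Suc q < x" by linarith
    then show ?thesis
    proof cases
      case 1
      then show ?thesis using split[OF True] h[of x] above[of x] q True by auto
    next
      case 2
      then show ?thesis using split[OF True] h[of q] q by auto
    next
      case 3
      then have "x - 1 \<in> {1..m}" using True by auto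
      then show ?thesis using split[OF True] h 3 by auto
    qed
  next
    case False
    then show ?thesis using ORCT_undefined[OF f False] unfolding split_fixed_point_def by auto
  qed
qed

lemma bij_betw_split_fixed_point:
  "bij_betw (split_fixed_point m)
     {h \<in> ORCT m. card (fixed_points m h) = 1}
     {f \<in> ORCT (Suc m). card (fixed_points (Suc m) f) = 0}"
proof -
  let ?A = "{h \<in> ORCT m. card (fixed_points m h) = 1}"
  let ?B = "{f \<in> ORCT (Suc m). card (fixed_points (Suc m) f) = 0}"
  have split: "split_fixed_point m h \<in> ?B \<and> merge_two_cycle m (split_fixed_point m h) = h"
    if "h \<in> ?A" for h
  proof -
    from that have h: "h \<in> ORCT m" and "\<exists>p\<in>{1..m}. h p = p"
      using card_fixed_points_eq_1_iff by auto
    then obtain p where p: "p \<in> {1..m}" "h p = p" by blast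
    show ?thesis
      using split_fixed_point_in_ORCT[OF h p] split_fixed_point_fixed_point_free[OF h p]
        merge_split_fixed_point[OF h p] card_fixed_points_eq_0_iff by auto
  qed
  have merge: "merge_two_cycle m f \<in> ?A \<and> split_fixed_point m (merge_two_cycle m f) = f"
    if "f \<in> ?B" for f
  proof -
    from that have f: "f \<in> ORCT (Suc m)" and free: "\<forall>x\<in>{1..Suc m}. f x \<noteq> x"
      using card_fixed_points_eq_0_iff by auto
    obtain q where "q \<in> {1..<Suc m}" and q: "f q = Suc q" "f (Suc q) = q"
      using ORCT_fixed_point_free_two_cycle[OF f _ free] by auto
    then have q_range: "q \<in> {1..m}" by simp
    have merged: "merge_two_cycle m f \<in> ORCT m"
      using merge_two_cycle_in_ORCT[OF f q_range q] .
    moreover have "card (fixed_points m (merge_two_cycle m f)) = 1"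
      unfolding card_fixed_points_eq_1_iff[OF merged]
      using q_range merge_two_cycle_fixed_point[OF f q_range q] by blast
    ultimately show ?thesis using split_merge_two_cycle[OF f q_range q] by simp
  qed
  show ?thesis
  proof (rule bij_betw_byWitness[where f' = "merge_two_cycle m"])
    show "\<forall>h\<in>?A. merge_two_cycle m (split_fixed_point m h) = h"
      using split by blast
    show "\<forall>f\<in>?B. split_fixed_point m (merge_two_cycle m f) = f"
      using merge by blast
    show "split_fixed_point m ` ?A \<subseteq> ?B"
      using split by (intro image_subsetI) blast
    show "merge_two_cycle m ` ?B \<subseteq> ?A"
      using merge by (intro image_subsetI) blast
  qed
qed

lemma finite_ORCT: "finite (ORCT n)"
  by (rule finite_subset[of _ "{1..n} \<rightarrow>\<^sub>E {1..n}"]) (auto simp: ORCT_def finite_PiE)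

lemma card_ORCT_eq_fixed_points_0_add_1:
  "card (ORCT n) = card {f \<in> ORCT n. card (fixed_points n f) = 0}
                 + card {f \<in> ORCT n. card (fixed_points n f) = 1}"
proof -
  let ?Z = "{f \<in> ORCT n. card (fixed_points n f) = 0}"
  let ?F = "{f \<in> ORCT n. card (fixed_points n f) = 1}"
  have partition: "ORCT n = ?Z \<union> ?F"
  proof (intro equalityI subsetI)
    fix f assume f: "f \<in> ORCT n"
    then have "card (fixed_points n f) = 0 \<or> card (fixed_points n f) = 1"
      using card_fixed_points_le_1[OF f] by linarith
    with f show "f \<in> ?Z \<union> ?F" by blast
  qed blast
  have "card (?Z \<union> ?F) = card ?Z + card ?F"
    using finite_ORCT by (intro card_Un_disjoint) auto
  then show ?thesis by (simp only: partition[symmetric])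
qed

lemma card_ORCT_Suc_eq_fixed_points_1:
  "card (ORCT (Suc m)) = card {f \<in> ORCT (Suc m). card (fixed_points (Suc m) f) = 1}
                       + card {f \<in> ORCT m. card (fixed_points m f) = 1}"
  using card_ORCT_eq_fixed_points_0_add_1[of "Suc m"]
    bij_betw_same_card[OF bij_betw_split_fixed_point[of m]] by simp

lemma seqa_add_seqa_Suc: "seqa (Suc k) + seqa (Suc (Suc k)) = real (k + 3) * 2 ^ k"
proof (induction k)
  case 0
  then show ?case by simp
next
  case (Suc k)
  then have IH: "seqa (Suc k) = real (k + 3) * 2 ^ k - seqa (Suc (Suc k))" by simp
  have "seqa (Suc (Suc (Suc k))) = ((real (k + 3) + 2) * seqa (Suc (Suc k))
      + 2 * (real (k + 3) + 1) * seqa (Suc k)) / real (k + 3)"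
    by simp
  also have "\<dots> = real (k + 4) * 2 ^ Suc k - seqa (Suc (Suc k))"
    unfolding IH by (simp add: field_simps)
  finally show ?case by simp
qed

lemma card_ORCT_fixed_points_1:
  "real (card {f \<in> ORCT (Suc k). card (fixed_points (Suc k) f) = 1}) = seqa (Suc k)"
proof (induction k)
  case 0
  have "card (ORCT 1) = 1" using card_ORCT[of 0] by simp
  moreover have "fixed_points 0 f = {}" for f unfolding fixed_points_def by simp
  ultimately show ?case using card_ORCT_Suc_eq_fixed_points_1[of 0] by simp
next
  case (Suc k)
  have "2 * card (ORCT (Suc (Suc k))) = 2 * ((k + 3) * 2 ^ k)"
    using card_ORCT[of "Suc k"] by (simp add: algebra_simps)
  then have "card (ORCT (Suc (Suc k))) = (k + 3) * 2 ^ k" by simp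
  then have "real (card (ORCT (Suc (Suc k)))) = seqa (Suc k) + seqa (Suc (Suc k))"
    using seqa_add_seqa_Suc[of k] by simp
  then show ?case
    using card_ORCT_Suc_eq_fixed_points_1[of "Suc k"] Suc.IH by simp
qed

theorem lemma3p9:
  shows "(\<forall>n\<ge>2. real (card {f \<in> ORCT n. card (fixed_points n f) = 0}) = seqa (n - 1))
       \<and> (\<forall>n\<ge>1. real (card {f \<in> ORCT n. card (fixed_points n f) = 1}) = seqa n)
       \<and> (\<forall>n m. m \<ge> 2 \<longrightarrow> {f \<in> ORCT n. card (fixed_points n f) = m} = {})"
proof (intro conjI allI impI)
  fix n :: nat
  assume "n \<ge> 2"
  define k where "k = n - 2"
  with \<open>n \<ge> 2\<close> have n: "n = Suc (Suc k)" by simp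
  show "real (card {f \<in> ORCT n. card (fixed_points n f) = 0}) = seqa (n - 1)"
    using bij_betw_same_card[OF bij_betw_split_fixed_point[of "Suc k"]]
      card_ORCT_fixed_points_1[of k] n by simp
next
  fix n :: nat
  assume "n \<ge> 1"
  then obtain k where "n = Suc k" by (cases n) auto
  then show "real (card {f \<in> ORCT n. card (fixed_points n f) = 1}) = seqa n"
    using card_ORCT_fixed_points_1 by simp
next
  fix n m :: nat
  assume "m \<ge> 2"
  show "{f \<in> ORCT n. card (fixed_points n f) = m} = {}"
  proof (intro equals0I)
    fix f assume "f \<in> {f \<in> ORCT n. card (fixed_points n f) = m}"
    then have "f \<in> ORCT n" and "card (fixed_points n f) = m" by simp_all
    then show False using card_fixed_points_le_1[of f n] \<open>m \<ge> 2\<close> by linarith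
  qed
qed

end
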